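(* Let $n\ge 1$, $b\in\mathbb{R}^n$, and let $A\in\mathbb{R}^{n\times n}$ be symmetric with all eigenvalues $\lambda_i$ satisfying $0<\lambda_i<2$, $i=1,\dots,n$. Define $g(x)=x-(Ax-b)$ and $f(x)=g(x)-x=-(Ax-b)$. Let $\bar x_k,\bar y_k\in\mathbb{R}^n$ be arbitrary vectors with $\bar y_k\neq\bar x_k$ (so that $f(\bar y_k)-f(\bar x_k)\neq 0$), and define $$\beta_k^\ast=-\frac{\langle f(\bar y_k)-f(\bar x_k),\,f(\bar x_k)\rangle}{\|f(\bar y_k)-f(\bar x_k)\|^2},$$ $$x^0_{k+1}=\bar x_k+\beta_k^\ast(\bar y_k-\bar x_k),\qquad x^1_{k+1}=g(\bar x_k)+\beta_k^\ast\big(g(\bar y_k)-g(\bar x_k)\big).$$ If $f(x^0_{k+1})\neq 0$, then $\|f(x^1_{k+1})\|<\|f(x^0_{k+1})\|$.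
   Context: $\|\cdot\|$ denotes the Euclidean norm on $\mathbb{R}^n$ and $\langle x,y\rangle=x^\intercal y$ the standard inner product. In the paper, $\bar x_k,\bar y_k$ arise as the affine combinations $\sum_i\alpha_i x_{k-m_k+i}$ and $\sum_i\alpha_i g(x_{k-m_k+i})$ (with $\sum_i\alpha_i=1$) computed in an Anderson acceleration step, but the statement holds for arbitrary vectors. *)

theory Defs
  imports "HOL-Analysis.Analysis"
begin

definition real_eigenvalue :: "real^'n^'n \<Rightarrow> real \<Rightarrow> bool" where
  "real_eigenvalue A l \<longleftrightarrow> (\<exists>v. v \<noteq> 0 \<and> A *v v = l *\<^sub>R v)"

end

theory Submission
  imports Defs
begin

text \<open>
  Since \<open>g\<close> is affine and the two extrapolations use the same coefficients, \<open>x1 = g x0\<close>; hence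
  \<open>f x1 = (I - A) (f x0)\<close>, whatever the value of \<open>beta\<close>. The symmetric matrix \<open>I - A\<close>
  has spectrum in \<open>(-1, 1)\<close> and is therefore a strict contraction. Without a spectral theorem at
  hand, the contraction bound comes from a variational argument: for self-adjoint \<open>B\<close>, a unit vector \<open>u\<close> maximising
  \<open>\<parallel>B x\<parallel>\<close> on the sphere is an eigenvector of \<open>B\<^sup>2\<close> for \<open>\<parallel>B u\<parallel>\<^sup>2\<close>, because the
  positive semidefinite form of \<open>\<parallel>B u\<parallel>\<^sup>2 I - B\<^sup>2\<close> vanishes at \<open>u\<close>; and an eigenvalue \<open>s\<^sup>2\<close>
  of \<open>B\<^sup>2\<close> yields the eigenvalue \<open>s\<close> or \<open>-s\<close> of \<open>B\<close>.
\<close>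

lemma quadratic_nonneg_imp_linear_coeff_zero:
  fixes a c :: real
  assumes "\<And>t. 0 \<le> a * t + c * t\<^sup>2"
  shows "a = 0"
proof (rule ccontr)
  assume "a \<noteq> 0"
  define d where "d = \<bar>c\<bar> + 1"
  have "d > 0" "c < d" by (auto simp: d_def)
  define t where "t = - a / d"
  have "a * t + c * t\<^sup>2 = a\<^sup>2 / d\<^sup>2 * (c - d)"
    using \<open>d > 0\<close> by (simp add: t_def power2_eq_square field_simps)
  also have "\<dots> < 0"
    using \<open>a \<noteq> 0\<close> \<open>d > 0\<close> \<open>c < d\<close> by (intro mult_pos_neg) auto
  finally show False using assms[of t] by simp
qed

lemma self_adjoint_psd_form_zero_imp_zero:
  fixes M :: "'a::real_inner \<Rightarrow> 'a"
  assumes "linear M"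
    and self_adjoint: "\<And>x y. M x \<bullet> y = x \<bullet> M y"
    and psd: "\<And>x. 0 \<le> M x \<bullet> x"
    and "M u \<bullet> u = 0"
  shows "M u = 0"
proof -
  have "0 \<le> (2 * (M u \<bullet> M u)) * t + (M (M u) \<bullet> M u) * t\<^sup>2" for t
  proof -
    have "M (u + t *\<^sub>R M u) \<bullet> (u + t *\<^sub>R M u)
        = M u \<bullet> u + 2 * t * (M u \<bullet> M u) + t\<^sup>2 * (M (M u) \<bullet> M u)"
      using self_adjoint[of u "M u"] inner_commute[of "M (M u)" u]
      by (simp add: linear_add[OF \<open>linear M\<close>] linear_scale[OF \<open>linear M\<close>]
          inner_add_left inner_add_right power2_eq_square algebra_simps)
    then show ?thesis using psd[of "u + t *\<^sub>R M u"] \<open>M u \<bullet> u = 0\<close> by (simp add: algebra_simps)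
  qed
  then have "2 * (M u \<bullet> M u) = 0" by (rule quadratic_nonneg_imp_linear_coeff_zero)
  then show ?thesis by simp
qed

lemma linear_norm_attains_sup_on_sphere:
  fixes B :: "'a::euclidean_space \<Rightarrow> 'b::real_normed_vector"
  assumes "linear B"
  obtains u where "norm u = 1" and "\<And>x. norm (B x) \<le> norm (B u) * norm x"
proof -
  have sphere_nonempty: "sphere (0::'a) 1 \<noteq> {}" by simp
  have "continuous_on (sphere 0 1) (\<lambda>x. norm (B x))"
    by (intro continuous_intros linear_continuous_on assms[unfolded linear_conv_bounded_linear])
  then obtain u where u: "u \<in> sphere 0 1" and max: "\<And>y. y \<in> sphere 0 1 \<Longrightarrow> norm (B y) \<le> norm (B u)"
    using continuous_attains_sup[OF compact_sphere sphere_nonempty] by blast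
  have "norm (B x) \<le> norm (B u) * norm x" for x
  proof (cases "x = 0")
    case False
    have "norm (B (x /\<^sub>R norm x)) \<le> norm (B u)"
      using False by (intro max) simp
    then show ?thesis
      using False by (simp add: linear_scale[OF assms] field_simps)
  qed (simp add: linear_0[OF assms])
  then show thesis using u that by simp
qed

lemma linear_square_eigenvalue_imp_eigenvalue:
  fixes B :: "'a::real_vector \<Rightarrow> 'a"
  assumes "linear B" and "u \<noteq> 0" and "B (B u) = s\<^sup>2 *\<^sub>R u"
  obtains v where "v \<noteq> 0" and "B v = s *\<^sub>R v \<or> B v = - s *\<^sub>R v"
proof (cases "B u + s *\<^sub>R u = 0")
  case True
  then have "B u = - s *\<^sub>R u" by (simp add: eq_neg_iff_add_eq_0)
  then show thesis using \<open>u \<noteq> 0\<close> that by blast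
next
  case False
  \<comment> \<open>\<open>(B - s) (B + s) u = 0\<close>, so \<open>(B + s) u\<close> is an eigenvector for \<open>s\<close>.\<close>
  have "B (B u + s *\<^sub>R u) = s *\<^sub>R (B u + s *\<^sub>R u)"
    using assms(3) by (simp add: linear_add[OF assms(1)] linear_scale[OF assms(1)]
        power2_eq_square scaleR_add_right add.commute)
  then show thesis using False that by blast
qed

lemma self_adjoint_eigenvalue_bounds_norm:
  fixes B :: "'a::euclidean_space \<Rightarrow> 'a"
  assumes "linear B"
    and self_adjoint: "\<And>x y. B x \<bullet> y = x \<bullet> B y"
  obtains v l where "v \<noteq> 0" and "B v = l *\<^sub>R v" and "\<And>x. norm (B x) \<le> \<bar>l\<bar> * norm x"
proof -
  obtain u where "norm u = 1" and bound: "\<And>x. norm (B x) \<le> norm (B u) * norm x"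
    using linear_norm_attains_sup_on_sphere[OF \<open>linear B\<close>] by blast
  define s where "s = norm (B u)"
  define M where "M x = s\<^sup>2 *\<^sub>R x - B (B x)" for x
  have "linear M"
    by (rule linearI) (simp_all add: M_def linear_add[OF \<open>linear B\<close>]
        linear_scale[OF \<open>linear B\<close>] scaleR_add_right scaleR_diff_right)
  moreover have "M x \<bullet> y = x \<bullet> M y" for x y
    by (simp add: M_def inner_diff_left inner_diff_right self_adjoint)
  moreover have "0 \<le> M x \<bullet> x" for x
  proof -
    have "(norm (B x))\<^sup>2 \<le> (s * norm x)\<^sup>2"
      using bound[of x] by (simp add: s_def power_mono)
    then show ?thesis
      by (simp add: M_def inner_diff_left self_adjoint[of "B x" x] power_mult_distrib
          dot_square_norm)
  qed
  moreover have "M u \<bullet> u = 0"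
    using \<open>norm u = 1\<close> by (simp add: M_def inner_diff_left self_adjoint[of "B u" u]
        dot_square_norm s_def)
  ultimately have "M u = 0" by (rule self_adjoint_psd_form_zero_imp_zero)
  then have "B (B u) = s\<^sup>2 *\<^sub>R u" by (simp add: M_def)
  moreover have "u \<noteq> 0" using \<open>norm u = 1\<close> by auto
  ultimately obtain v where "v \<noteq> 0" and v: "B v = s *\<^sub>R v \<or> B v = - s *\<^sub>R v"
    using linear_square_eigenvalue_imp_eigenvalue[OF \<open>linear B\<close>] by blast
  have "norm (B x) \<le> \<bar>s\<bar> * norm x" "norm (B x) \<le> \<bar>- s\<bar> * norm x" for x
    using bound[of x] by (simp_all add: s_def)
  with v that[OF \<open>v \<noteq> 0\<close>] show thesis by blast
qed

lemma norm_diff_matrix_vector_less: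
  fixes A :: "real^'n^'n" and r :: "real^'n"
  assumes "transpose A = A"
    and eig: "\<And>l. real_eigenvalue A l \<Longrightarrow> 0 < l \<and> l < 2"
    and "r \<noteq> 0"
  shows "norm (r - A *v r) < norm r"
proof -
  define B where "B x = x - A *v x" for x :: "real^'n"
  have "linear B"
    unfolding B_def by (intro linear_compose_sub linear_ident matrix_vector_mul_linear)
  moreover have "B x \<bullet> y = x \<bullet> B y" for x y
  proof -
    have "(A *v x) \<bullet> y = x \<bullet> (A *v y)"
      by (metis \<open>transpose A = A\<close> dot_lmul_matrix transpose_matrix_vector)
    then show ?thesis by (simp add: B_def inner_diff_left inner_diff_right)
  qed
  ultimately obtain v l where "v \<noteq> 0" "B v = l *\<^sub>R v"
    and bound: "\<And>x. norm (B x) \<le> \<bar>l\<bar> * norm x"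
    using self_adjoint_eigenvalue_bounds_norm by blast
  then have "A *v v = (1 - l) *\<^sub>R v" by (simp add: B_def scaleR_diff_left algebra_simps)
  then have "\<bar>l\<bar> < 1"
    using eig \<open>v \<noteq> 0\<close> unfolding real_eigenvalue_def by fastforce
  then have "\<bar>l\<bar> * norm r < norm r" using \<open>r \<noteq> 0\<close> by simp
  then show ?thesis using bound[of r] by (simp add: B_def)
qed

theorem theorem1:
  fixes A :: "real^'n^'n" and b xb yb :: "real^'n"
    and g f :: "real^'n \<Rightarrow> real^'n" and beta :: real and x0 x1 :: "real^'n"
  assumes symm: "transpose A = A"
    and eig: "\<And>l. real_eigenvalue A l \<Longrightarrow> 0 < l \<and> l < 2"
    and neq: "yb \<noteq> xb"
  defines "g \<equiv> (\<lambda>x. x - (A *v x - b))"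
    and "f \<equiv> (\<lambda>x. g x - x)"
    and "beta \<equiv> - (inner (f yb - f xb) (f xb)) / (norm (f yb - f xb))\<^sup>2"
    and "x0 \<equiv> xb + beta *\<^sub>R (yb - xb)"
    and "x1 \<equiv> g xb + beta *\<^sub>R (g yb - g xb)"
  assumes nz: "f x0 \<noteq> 0"
  shows "norm (f x1) < norm (f x0)"
proof -
  have f: "f x = b - A *v x" for x by (simp add: f_def g_def)
  have "x1 = g x0"
    by (simp add: x1_def x0_def g_def matrix_vector_right_distrib matrix_vector_mult_scaleR
        matrix_vector_mult_diff_distrib algebra_simps)
  then have "f x1 = f x0 - A *v f x0"
    by (simp add: f g_def matrix_vector_right_distrib matrix_vector_mult_diff_distrib)
  then show ?thesis using norm_diff_matrix_vector_less[OF symm eig nz] by simp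
qed

end
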